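(* Every sublattice $L$ of $A_2$ of rank $2$ is reflection invariant.
   Context: Let $H_0=\{x\in\mathbb R^{3}:x_0+x_1+x_2=0\}$ and $A_2=H_0\cap\mathbb Z^3$. For $p,q\in H_0$ let $d_\triangle(p,q)=\max_i(p_i-q_i)$, and for $x\in H_0$ let $h_{\triangle,L}(x)=\min_{p\in L}d_\triangle(x,p)$. $\mathrm{Crit}(L)$ denotes the set of points of $H_0$ that are local maxima of $h_{\triangle,L}$ on $H_0$. $L$ is reflection invariant if there exists $t\in\mathbb R^{3}$ with $-\mathrm{Crit}(L)=\mathrm{Crit}(L)+t$. *)

theory Defs
  imports "HOL-Analysis.Analysis"
begin

definition H0 :: "(real^3) set" where
  "H0 = {x. x$0 + x$1 + x$2 = 0}"

definition A2 :: "(real^3) set" where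
  "A2 = {x \<in> H0. \<forall>i. x$i \<in> \<int>}"

definition d_tri :: "real^3 \<Rightarrow> real^3 \<Rightarrow> real" where
  "d_tri p q = Max (range (\<lambda>i. p$i - q$i))"

text \<open>h_{tri,L}(x) = min over p in L of d_tri(x,p); the minimum is attained for
  lattices, so it coincides with the infimum used here.\<close>
definition h_tri :: "(real^3) set \<Rightarrow> real^3 \<Rightarrow> real" where
  "h_tri L x = Inf ((\<lambda>p. d_tri x p) ` L)"

definition Crit :: "(real^3) set \<Rightarrow> (real^3) set" where
  "Crit L = {x \<in> H0. \<exists>e>0. \<forall>y\<in>H0. dist y x < e \<longrightarrow> h_tri L y \<le> h_tri L x}"

definition reflection_invariant :: "(real^3) set \<Rightarrow> bool" where
  "reflection_invariant L \<longleftrightarrow> (\<exists>t::real^3. uminus ` Crit L = (\<lambda>x. x + t) ` Crit L)"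

definition sublattice_rank2 :: "(real^3) set \<Rightarrow> bool" where
  "sublattice_rank2 L \<longleftrightarrow> L \<subseteq> A2 \<and> 0 \<in> L \<and> (\<forall>x\<in>L. \<forall>y\<in>L. x - y \<in> L) \<and> dim L = 2"

end

theory Submission
  imports Defs
begin

(*
  Every additive subgroup L of A2 is reflection invariant.  Write 1 = (1,1,1) and a(x) = x - h_tri L x * 1.

  For x \<in> Crit L the point a(x) is a corner of L: no point of L lies strictly above a(x) in
  all three coordinates, and for each coordinate i some point of L agrees with a(x) in
  coordinate i and lies strictly above it in the other two.  (The first property holds for
  every x \<in> H0; the second comes from perturbing x inside H0 and the integrality of L.)
  Corners are permuted by the translations in L and form an antichain for the coordinatewise
  order.  A descent argument on corners normalised to a\<^sub>0 = 0 shows that no three corners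
  are pairwise incongruent modulo L.  Two critical points are congruent modulo L as soon as
  their corners are, so Crit L meets at most two cosets of L.  Since Crit L is invariant under
  L, it is then point-symmetric about the midpoint of two points representing these cosets,
  and point symmetry of Crit L is exactly reflection invariance.
*)

lemma exhaust_coords: "(i::3) = 0 \<or> i = 1 \<or> i = 2"
proof (induct i)
  case (of_int z)
  then have "z = 0 \<or> z = 1 \<or> z = 2" by fastforce
  then show ?case by auto
qed

lemma forall_coords: "(\<forall>i::3. P i) \<longleftrightarrow> P 0 \<and> P 1 \<and> P 2"
  using exhaust_coords by metis

lemma coords_distinct: "(0::3) \<noteq> 1" "(0::3) \<noteq> 2" "(1::3) \<noteq> 2"
  by simp_all

lemma Ints_isolated_below:
  fixes z :: real
  shows "\<exists>\<delta>>0. \<forall>m\<in>\<int>. z - \<delta> < m \<and> m \<le> z \<longrightarrow> m = z"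
proof (cases "z \<in> \<int>")
  case True
  then show ?thesis
    by (intro exI[of _ 1]) (auto elim!: Ints_cases)
next
  case False
  then have "of_int \<lfloor>z\<rfloor> < z" by (metis Ints_of_int floor_less_iff le_less of_int_floor_le)
  moreover have "m \<le> of_int \<lfloor>z\<rfloor>" if "m \<in> \<int>" "m \<le> z" for m
    using that by (auto elim!: Ints_cases simp: le_floor_iff)
  ultimately show ?thesis
    by (intro exI[of _ "z - of_int \<lfloor>z\<rfloor>"]) force
qed

lemma d_tri_ge: "p$i - q$i \<le> d_tri p q"
  unfolding d_tri_def by (rule Max_ge) auto

lemma d_tri_less_iff: "d_tri p q < t \<longleftrightarrow> (\<forall>i. p$i - q$i < t)"
  unfolding d_tri_def by (subst Max_less_iff) auto

lemma d_tri_nonneg: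
  assumes "p \<in> H0" "q \<in> H0"
  shows "0 \<le> d_tri p q"
proof -
  have "p$0 - q$0 \<le> d_tri p q" "p$1 - q$1 \<le> d_tri p q" "p$2 - q$2 \<le> d_tri p q"
    by (rule d_tri_ge)+
  with assms show ?thesis by (simp add: H0_def)
qed

lemma d_tri_translate: "d_tri (y + l) p = d_tri y (p - l)"
  unfolding d_tri_def by (simp add: algebra_simps)

definition free_below :: "(real^3) set \<Rightarrow> real^3 \<Rightarrow> bool" where
  "free_below L a \<longleftrightarrow> (\<forall>q\<in>L. \<not> (a$0 < q$0 \<and> a$1 < q$1 \<and> a$2 < q$2))"

definition corner :: "(real^3) set \<Rightarrow> real^3 \<Rightarrow> bool" where
  "corner L a \<longleftrightarrow> free_below L a
     \<and> (\<exists>p\<in>L. p$0 = a$0 \<and> a$1 < p$1 \<and> a$2 < p$2)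
     \<and> (\<exists>p\<in>L. p$1 = a$1 \<and> a$0 < p$0 \<and> a$2 < p$2)
     \<and> (\<exists>p\<in>L. p$2 = a$2 \<and> a$0 < p$0 \<and> a$1 < p$1)"

definition normal_corner :: "(real^3) set \<Rightarrow> real^3 \<Rightarrow> bool" where
  "normal_corner L a \<longleftrightarrow> corner L a \<and> a$0 = 0 \<and> a$1 < 0 \<and> a$2 < 0"

lemma corner_free: "corner L a \<Longrightarrow> q \<in> L \<Longrightarrow> \<not> (a$0 < q$0 \<and> a$1 < q$1 \<and> a$2 < q$2)"
  unfolding corner_def free_below_def by blast

(* Corners form an antichain: a corner lying coordinatewise below another one equals it,
   because each support point of the upper corner would otherwise lie strictly above the
   lower one. *)
lemma corner_antichain:
  assumes a: "corner L a" and b: "corner L b"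
    and le: "a$0 \<le> b$0" "a$1 \<le> b$1" "a$2 \<le> b$2"
  shows "a = b"
proof -
  obtain p0 where p0: "p0 \<in> L" "p0$0 = b$0" "b$1 < p0$1" "b$2 < p0$2"
    using b unfolding corner_def by blast
  obtain p1 where p1: "p1 \<in> L" "p1$1 = b$1" "b$0 < p1$0" "b$2 < p1$2"
    using b unfolding corner_def by blast
  obtain p2 where p2: "p2 \<in> L" "p2$2 = b$2" "b$0 < p2$0" "b$1 < p2$1"
    using b unfolding corner_def by blast
  have "a$0 = b$0" using corner_free[OF a p0(1)] p0 le by linarith
  moreover have "a$1 = b$1" using corner_free[OF a p1(1)] p1 le by linarith
  moreover have "a$2 = b$2" using corner_free[OF a p2(1)] p2 le by linarith
  ultimately show ?thesis by (simp add: vec_eq_iff forall_coords)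
qed

lemma corner_antitone:
  assumes "corner L a" "corner L b" "a$0 = b$0" "a$1 < b$1"
  shows "b$2 < a$2"
proof (rule ccontr)
  assume "\<not> b$2 < a$2"
  then have "a = b" using corner_antichain[OF assms(1,2)] assms(3,4) by simp
  with assms(4) show False by simp
qed

definition lower_corner :: "(real^3) set \<Rightarrow> real^3 \<Rightarrow> real^3" where
  "lower_corner L x = x - (\<chi> k. h_tri L x)"

lemma lower_corner_nth [simp]: "(lower_corner L x)$i = x$i - h_tri L x"
  by (simp add: lower_corner_def)

locale A2_subgroup =
  fixes L :: "(real^3) set"
  assumes subset_A2: "L \<subseteq> A2"
    and zero_mem: "0 \<in> L"
    and diff_mem: "x \<in> L \<Longrightarrow> y \<in> L \<Longrightarrow> x - y \<in> L"
begin

lemma neg_mem: "x \<in> L \<Longrightarrow> - x \<in> L"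
  using diff_mem[OF zero_mem] by fastforce

lemma add_mem: "x \<in> L \<Longrightarrow> y \<in> L \<Longrightarrow> x + y \<in> L"
  using diff_mem[of x "- y"] neg_mem by simp

lemma diff_not_mem_commute: "x - y \<notin> L \<Longrightarrow> y - x \<notin> L"
  using neg_mem[of "y - x"] by auto

lemma mem_H0: "x \<in> L \<Longrightarrow> x \<in> H0"
  using subset_A2 by (auto simp: A2_def)

lemma mem_Ints: "x \<in> L \<Longrightarrow> x$i \<in> \<int>"
  using subset_A2 by (auto simp: A2_def)

lemma translate_L: "l \<in> L \<Longrightarrow> (\<lambda>p. p - l) ` L = L"
  by (auto intro!: image_eqI[where x = "_ + l"] diff_mem add_mem)

lemma h_tri_le:
  assumes "x \<in> H0" "p \<in> L"
  shows "h_tri L x \<le> d_tri x p"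
  unfolding h_tri_def
proof (rule cInf_lower)
  show "d_tri x p \<in> (\<lambda>p. d_tri x p) ` L" using assms(2) by simp
  show "bdd_below ((\<lambda>p. d_tri x p) ` L)"
    using assms(1) by (auto intro!: bdd_belowI[of _ 0] d_tri_nonneg mem_H0)
qed

lemma h_tri_less: "h_tri L x < t \<Longrightarrow> \<exists>p\<in>L. d_tri x p < t"
  unfolding h_tri_def using cInf_lessD[of "(\<lambda>p. d_tri x p) ` L"] zero_mem by blast

lemma h_tri_translate:
  assumes "l \<in> L"
  shows "h_tri L (y + l) = h_tri L y"
proof -
  have "(\<lambda>p. d_tri (y + l) p) ` L = (\<lambda>p. d_tri y p) ` (\<lambda>p. p - l) ` L"
    by (simp add: image_image d_tri_translate)
  then show ?thesis by (simp add: h_tri_def translate_L[OF assms])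
qed

lemma Crit_translate:
  assumes x: "x \<in> Crit L" and l: "l \<in> L"
  shows "x + l \<in> Crit L"
proof -
  have xH: "x \<in> H0" using x by (simp add: Crit_def)
  have lH: "l \<in> H0" using mem_H0[OF l] .
  obtain e where e: "e > 0" "\<forall>y\<in>H0. dist y x < e \<longrightarrow> h_tri L y \<le> h_tri L x"
    using x unfolding Crit_def by blast
  have "h_tri L y \<le> h_tri L (x + l)" if "y \<in> H0" "dist y (x + l) < e" for y
  proof -
    have "y - l \<in> H0" using that(1) lH by (simp add: H0_def)
    moreover have "dist (y - l) x = dist y (x + l)" by (simp add: dist_norm algebra_simps)
    ultimately have "h_tri L (y - l) \<le> h_tri L x" using e that(2) by simp
    then show ?thesis using h_tri_translate[OF l, of "y - l"] h_tri_translate[OF l, of x] by simp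
  qed
  moreover have "x + l \<in> H0" using xH lH by (simp add: H0_def)
  ultimately show ?thesis using e(1) unfolding Crit_def by blast
qed

lemma corner_translate:
  assumes a: "corner L a" and l: "l \<in> L"
  shows "corner L (a + l)"
proof -
  have "free_below L (a + l)"
    using a diff_mem[OF _ l] unfolding corner_def free_below_def by fastforce
  moreover obtain p0 where "p0 \<in> L" "p0$0 = a$0" "a$1 < p0$1" "a$2 < p0$2"
    using a unfolding corner_def by blast
  then have "\<exists>p\<in>L. p$0 = (a + l)$0 \<and> (a + l)$1 < p$1 \<and> (a + l)$2 < p$2"
    by (intro bexI[of _ "p0 + l"] add_mem l) auto
  moreover obtain p1 where "p1 \<in> L" "p1$1 = a$1" "a$0 < p1$0" "a$2 < p1$2"
    using a unfolding corner_def by blast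
  then have "\<exists>p\<in>L. p$1 = (a + l)$1 \<and> (a + l)$0 < p$0 \<and> (a + l)$2 < p$2"
    by (intro bexI[of _ "p1 + l"] add_mem l) auto
  moreover obtain p2 where "p2 \<in> L" "p2$2 = a$2" "a$0 < p2$0" "a$1 < p2$1"
    using a unfolding corner_def by blast
  then have "\<exists>p\<in>L. p$2 = (a + l)$2 \<and> (a + l)$0 < p$0 \<and> (a + l)$1 < p$1"
    by (intro bexI[of _ "p2 + l"] add_mem l) auto
  ultimately show ?thesis unfolding corner_def by blast
qed

(* For x \<in> H0 no point of L lies strictly above the lower corner of x: such a point would
   be closer to x than h_tri L x. *)
lemma free_below_lower_corner:
  assumes "x \<in> H0"
  shows "free_below L (lower_corner L x)"
  unfolding free_below_def
proof (intro ballI notI)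
  fix q assume q: "q \<in> L" and above: "(lower_corner L x)$0 < q$0 \<and>
    (lower_corner L x)$1 < q$1 \<and> (lower_corner L x)$2 < q$2"
  have "d_tri x q < h_tri L x"
    using above by (simp add: d_tri_less_iff forall_coords)
  with h_tri_le[OF assms q] show False by simp
qed

(* Perturbing a critical point x inside H0 in the direction that lowers coordinate i and
   raises the other two yields points of L just above the lower corner of x, except in
   coordinate i where they may fall short by an arbitrarily small amount. *)
lemma crit_near_support:
  assumes x: "x \<in> Crit L" and "\<delta> > 0"
  shows "\<exists>p\<in>L. (lower_corner L x)$i - \<delta> < p$i
    \<and> (\<forall>j. j \<noteq> i \<longrightarrow> (lower_corner L x)$j < p$j)"
proof -
  obtain e where e: "e > 0" "\<forall>y\<in>H0. dist y x < e \<longrightarrow> h_tri L y \<le> h_tri L x"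
    using x unfolding Crit_def by blast
  have xH: "x \<in> H0" using x by (simp add: Crit_def)
  define \<epsilon> where "\<epsilon> = min (e/7) (\<delta>/3)"
  have \<epsilon>: "\<epsilon> > 0" "\<epsilon> \<le> e/7" "\<epsilon> \<le> \<delta>/3" using e \<open>\<delta> > 0\<close> by (auto simp: \<epsilon>_def)
  define v :: "real^3" where "v = (\<chi> k. if k = i then -2 else 1)"
  define y where "y = x + \<epsilon> *\<^sub>R v"
  have "v$0 + v$1 + v$2 = 0" using exhaust_coords[of i] by (auto simp: v_def)
  moreover have "y$0 + y$1 + y$2 = (x$0 + x$1 + x$2) + \<epsilon> * (v$0 + v$1 + v$2)"
    by (simp add: y_def algebra_simps)
  ultimately have yH: "y \<in> H0" using xH by (simp add: H0_def)
  have "norm v \<le> (\<Sum>k\<in>UNIV. \<bar>v$k\<bar>)" by (rule norm_le_l1_cart)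
  also have "\<dots> \<le> of_nat (card (UNIV::3 set)) * 2" by (rule sum_bounded_above) (auto simp: v_def)
  finally have "dist y x \<le> \<epsilon> * 6" using \<epsilon>(1) by (simp add: y_def dist_norm mult_left_mono)
  then have "h_tri L y \<le> h_tri L x" using e \<epsilon> yH by simp
  then have "h_tri L y < h_tri L x + \<epsilon>/2" using \<epsilon>(1) by linarith
  then obtain p where p: "p \<in> L" "d_tri y p < h_tri L x + \<epsilon>/2"
    using h_tri_less by blast
  then have "\<And>k. x$k + \<epsilon> * v$k - p$k < h_tri L x + \<epsilon>/2"
    by (simp add: d_tri_less_iff y_def)
  then have above: "\<And>k. (lower_corner L x)$k - \<epsilon>/2 + \<epsilon> * v$k < p$k"
    by (simp add: algebra_simps)
  have "(lower_corner L x)$i - \<delta> < p$i"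
    using above[of i] \<epsilon>(1,3) by (simp add: v_def)
  moreover have "(lower_corner L x)$j < p$j" if "j \<noteq> i" for j
    using above[of j] \<epsilon>(1) that by (simp add: v_def)
  ultimately show ?thesis using p(1) by blast
qed

(* Integrality of L closes the gap: the lower corner of a critical point is supported in
   coordinate i by a point of L. *)
lemma crit_support:
  assumes x: "x \<in> Crit L"
  shows "\<exists>p\<in>L. p$i = (lower_corner L x)$i \<and> (\<forall>j. j \<noteq> i \<longrightarrow> (lower_corner L x)$j < p$j)"
proof -
  let ?a = "lower_corner L x"
  obtain \<delta> where \<delta>: "\<delta> > 0" "\<forall>m\<in>\<int>. ?a$i - \<delta> < m \<and> m \<le> ?a$i \<longrightarrow> m = ?a$i"
    using Ints_isolated_below by blast
  obtain p where p: "p \<in> L" "?a$i - \<delta> < p$i" "\<forall>j. j \<noteq> i \<longrightarrow> ?a$j < p$j"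
    using crit_near_support[OF x \<delta>(1)] by blast
  have "\<not> (\<forall>k. ?a$k < p$k)"
    using free_below_lower_corner[of x] x p(1) by (auto simp: Crit_def free_below_def forall_coords)
  then have "p$i \<le> ?a$i" using p(3) by (metis not_le)
  then have "p$i = ?a$i" using \<delta>(2) p(2) mem_Ints[OF p(1)] by blast
  with p show ?thesis by blast
qed

lemma crit_corner:
  assumes x: "x \<in> Crit L"
  shows "corner L (lower_corner L x)"
  using free_below_lower_corner[of x] x crit_support[OF x, of 0] crit_support[OF x, of 1]
    crit_support[OF x, of 2]
  unfolding corner_def Crit_def by (metis (no_types, lifting) coords_distinct mem_Collect_eq)

(* Translating by a support point normalises the lower corner of a critical point. *)
lemma crit_normal_corner:
  assumes x: "x \<in> Crit L"
  shows "\<exists>l\<in>L. normal_corner L (lower_corner L x + l)"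
proof -
  obtain p where p: "p \<in> L" "p$0 = (lower_corner L x)$0"
    "(lower_corner L x)$1 < p$1" "(lower_corner L x)$2 < p$2"
    using crit_corner[OF x] unfolding corner_def by blast
  have "corner L (lower_corner L x + - p)"
    using corner_translate[OF crit_corner[OF x] neg_mem[OF p(1)]] .
  with p show ?thesis unfolding normal_corner_def by (intro bexI[of _ "- p"] neg_mem) auto
qed

(* Points of H0 whose difference lies in L up to a multiple of (1,1,1) are congruent,
   since L is contained in H0. *)
lemma congruent_up_to_diagonal:
  assumes "x \<in> H0" "y \<in> H0" "x - y - (\<chi> k. c) \<in> L"
  shows "x - y \<in> L"
proof -
  have "c = 0" using mem_H0[OF assms(3)] assms(1,2) by (simp add: H0_def)
  then have "(\<chi> k. c) = (0::real^3)" by (simp add: vec_eq_iff)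
  with assms(3) show ?thesis by simp
qed

lemma congruent_if_lower_corners_congruent:
  assumes "x \<in> H0" "y \<in> H0" "l \<in> L" "m \<in> L"
    and "(lower_corner L x + l) - (lower_corner L y + m) \<in> L"
  shows "x - y \<in> L"
proof -
  have "(lower_corner L x + l) - (lower_corner L y + m) - (l - m)
      = x - y - (\<chi> k. h_tri L x - h_tri L y)"
    by (simp add: lower_corner_def vec_eq_iff)
  then have "x - y - (\<chi> k. h_tri L x - h_tri L y) \<in> L"
    using diff_mem[OF assms(5) diff_mem[OF assms(3,4)]] by simp
  with assms(1,2) show ?thesis by (rule congruent_up_to_diagonal)
qed

(* Let b be a normal corner strictly between the normal corners a and c in
   coordinate 1.  The support points q1, q2 of b in coordinates 1 and 2 cannot lie above
   a resp. c, and their difference w = q2 - q1 cannot lie above b in either direction; so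
   w has first coordinate 0, positive integral second coordinate, and b - w lies below a
   in coordinate 2. *)
lemma middle_corner_shift:
  assumes a: "normal_corner L a" and b: "normal_corner L b" and c: "normal_corner L c"
    and ab: "a$1 < b$1" and bc: "b$1 < c$1"
  obtains w where "w \<in> L" "w$0 = 0" "1 \<le> w$1" "b$2 - w$2 \<le> a$2"
proof -
  have ca: "corner L a" and a0: "a$0 = 0" and a2: "a$2 < 0"
    using a by (auto simp: normal_corner_def)
  have cb: "corner L b" and b0: "b$0 = 0" and b1: "b$1 < 0" and b2: "b$2 < 0"
    using b by (auto simp: normal_corner_def)
  have cc: "corner L c" and c0: "c$0 = 0" and c1: "c$1 < 0"
    using c by (auto simp: normal_corner_def)
  have "b$2 < a$2" using corner_antitone[OF ca cb] a0 b0 ab by simp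
  have "c$2 < b$2" using corner_antitone[OF cb cc] b0 c0 bc by simp
  obtain q1 where q1: "q1 \<in> L" "q1$1 = b$1" "b$0 < q1$0" "b$2 < q1$2"
    using cb unfolding corner_def by blast
  obtain q2 where q2: "q2 \<in> L" "q2$2 = b$2" "b$0 < q2$0" "b$1 < q2$1"
    using cb unfolding corner_def by blast
  have q1_below_a: "q1$2 \<le> a$2" using corner_free[OF ca q1(1)] q1 a0 b0 ab by linarith
  have q2_below_c: "q2$1 \<le> c$1" using corner_free[OF cc q2(1)] q2 c0 b0 \<open>c$2 < b$2\<close> by linarith
  have "q2$0 - q1$0 \<le> 0"
    using corner_free[OF cb diff_mem[OF q2(1) q1(1)]] q1 q2 b0 b1 b2 q1_below_a a2 by auto
  moreover have "q1$0 - q2$0 \<le> 0"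
    using corner_free[OF cb diff_mem[OF q1(1) q2(1)]] q1 q2 b0 b1 b2 q2_below_c c1 by auto
  ultimately have "(q2 - q1)$0 = 0" by simp
  moreover have "1 \<le> (q2 - q1)$1"
    using mem_Ints[OF diff_mem[OF q2(1) q1(1)], of 1] q1(2) q2(4)
    by (auto elim!: Ints_cases)
  moreover have "b$2 - (q2 - q1)$2 \<le> a$2" using q1_below_a q2(2) by simp
  ultimately show ?thesis using that diff_mem[OF q2(1) q1(1)] by blast
qed

lemma lower_middle_corner:
  assumes a: "normal_corner L a" and b: "normal_corner L b" and c: "normal_corner L c"
    and ab: "a$1 < b$1" and bc: "b$1 < c$1" and "a - b \<notin> L" "b - c \<notin> L"
  shows "\<exists>b'. normal_corner L b' \<and> a$1 < b'$1 \<and> b'$1 \<le> b$1 - 1 \<and> a - b' \<notin> L \<and> b' - c \<notin> L"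
proof -
  obtain w where w: "w \<in> L" "w$0 = 0" "1 \<le> w$1" "b$2 - w$2 \<le> a$2"
    using middle_corner_shift[OF a b c ab bc] .
  define b' where "b' = b + - w"
  have cb': "corner L b'"
    using corner_translate[OF _ neg_mem[OF w(1)]] b by (simp add: normal_corner_def b'_def)
  have b'_coords: "b'$0 = 0" "b'$1 = b$1 - w$1" "b'$2 \<le> a$2"
    using b w by (simp_all add: normal_corner_def b'_def)
  have "normal_corner L b'"
    using cb' b'_coords a b w(3) by (simp add: normal_corner_def)
  moreover have "a$1 < b'$1"
  proof (rule ccontr)
    assume "\<not> a$1 < b'$1"
    then have "b' = a"
      using corner_antichain[OF cb', of a] a b'_coords by (simp add: normal_corner_def)
    then have "a - b = b' - b" by simp
    also have "\<dots> = - w" by (simp add: b'_def)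
    finally have "a - b = - w" .
    with neg_mem[OF w(1)] \<open>a - b \<notin> L\<close> show False by simp
  qed
  moreover have "a - b' \<notin> L"
  proof
    assume "a - b' \<in> L"
    then have "(a - b') - w \<in> L" using diff_mem w(1) by blast
    with \<open>a - b \<notin> L\<close> show False by (simp add: b'_def)
  qed
  moreover have "b' - c \<notin> L"
  proof
    assume "b' - c \<in> L"
    then have "(b' - c) + w \<in> L" using add_mem w(1) by blast
    with \<open>b - c \<notin> L\<close> show False by (simp add: b'_def algebra_simps)
  qed
  ultimately show ?thesis using b'_coords w(3) by auto
qed

(* Iterating the descent step: no normal corner lies strictly between two others in
   coordinate 1 while being incongruent to both. *)
lemma no_incongruent_middle_corner:
  assumes "normal_corner L a" "normal_corner L b" "normal_corner L c"
    "a$1 < b$1" "b$1 < c$1" "a - b \<notin> L" "b - c \<notin> L"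
  shows False
  using assms
proof (induction "nat \<lceil>b$1 - a$1\<rceil>" arbitrary: b rule: less_induct)
  case less
  obtain b' where b': "normal_corner L b'" "a$1 < b'$1" "b'$1 \<le> b$1 - 1"
    "a - b' \<notin> L" "b' - c \<notin> L"
    using lower_middle_corner[OF less.prems] by blast
  have "nat \<lceil>b'$1 - a$1\<rceil> < nat \<lceil>b$1 - a$1\<rceil>"
    using b'(2,3) by linarith
  then show False using less.hyps less.prems b' by fastforce
qed

lemma normal_corner_eq:
  assumes "normal_corner L a" "normal_corner L b" "a$1 = b$1"
  shows "a = b"
proof -
  have corners: "corner L a" "corner L b" and "a$0 = b$0"
    using assms(1,2) by (simp_all add: normal_corner_def)
  show ?thesis
  proof (cases "a$2 \<le> b$2")
    case True
    show ?thesis by (rule corner_antichain[OF corners]) (use True \<open>a$0 = b$0\<close> assms(3) in simp_all)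
  next
    case False
    have "b = a"
      by (rule corner_antichain[OF corners(2,1)]) (use False \<open>a$0 = b$0\<close> assms(3) in simp_all)
    then show ?thesis by simp
  qed
qed

lemma no_three_incongruent_corners:
  assumes corners: "normal_corner L a" "normal_corner L b" "normal_corner L c"
    and incongruent: "a - b \<notin> L" "b - c \<notin> L" "a - c \<notin> L"
  shows False
proof -
  have incongruent': "b - a \<notin> L" "c - b \<notin> L" "c - a \<notin> L"
    using incongruent diff_not_mem_commute by auto
  have "a$1 \<noteq> b$1" "b$1 \<noteq> c$1" "a$1 \<noteq> c$1"
    using normal_corner_eq[OF corners(1,2)] normal_corner_eq[OF corners(2,3)]
      normal_corner_eq[OF corners(1,3)] incongruent zero_mem by (metis diff_self)+
  then consider "a$1 < b$1" "b$1 < c$1" | "a$1 < c$1" "c$1 < b$1" | "b$1 < a$1" "a$1 < c$1"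
    | "b$1 < c$1" "c$1 < a$1" | "c$1 < a$1" "a$1 < b$1" | "c$1 < b$1" "b$1 < a$1"
    by linarith
  then show False
  proof cases
    case 1
    show False by (rule no_incongruent_middle_corner[OF corners(1,2,3) 1 incongruent(1,2)])
  next
    case 2
    show False by (rule no_incongruent_middle_corner[OF corners(1,3,2) 2 incongruent(3) incongruent'(2)])
  next
    case 3
    show False by (rule no_incongruent_middle_corner[OF corners(2,1,3) 3 incongruent'(1) incongruent(3)])
  next
    case 4
    show False by (rule no_incongruent_middle_corner[OF corners(2,3,1) 4 incongruent(2) incongruent'(3)])
  next
    case 5
    show False by (rule no_incongruent_middle_corner[OF corners(3,1,2) 5 incongruent'(3) incongruent(1)])
  next
    case 6
    show False by (rule no_incongruent_middle_corner[OF corners(3,2,1) 6 incongruent'(2,1)])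
  qed
qed

lemma Crit_two_cosets:
  assumes x: "x \<in> Crit L" and y: "y \<in> Crit L" and z: "z \<in> Crit L"
  shows "x - y \<in> L \<or> y - z \<in> L \<or> x - z \<in> L"
proof (rule ccontr)
  assume incongruent: "\<not> (x - y \<in> L \<or> y - z \<in> L \<or> x - z \<in> L)"
  have H: "x \<in> H0" "y \<in> H0" "z \<in> H0" using x y z by (auto simp: Crit_def)
  obtain l where l: "l \<in> L" "normal_corner L (lower_corner L x + l)"
    using crit_normal_corner[OF x] by blast
  obtain m where m: "m \<in> L" "normal_corner L (lower_corner L y + m)"
    using crit_normal_corner[OF y] by blast
  obtain n where n: "n \<in> L" "normal_corner L (lower_corner L z + n)"
    using crit_normal_corner[OF z] by blast
  show False
    using no_three_incongruent_corners[OF l(2) m(2) n(2)] incongruent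
      congruent_if_lower_corners_congruent[OF H(1) H(2) l(1) m(1)]
      congruent_if_lower_corners_congruent[OF H(2) H(3) m(1) n(1)]
      congruent_if_lower_corners_congruent[OF H(1) H(3) l(1) n(1)]
    by blast
qed

(* Being invariant under L and meeting at most two cosets of L, Crit L is point-symmetric. *)
lemma Crit_point_symmetric: "\<exists>s. \<forall>y\<in>Crit L. s - y \<in> Crit L"
proof (cases "Crit L = {}")
  case True
  then show ?thesis by blast
next
  case False
  then obtain x where x: "x \<in> Crit L" by blast
  show ?thesis
  proof (cases "\<forall>y\<in>Crit L. x - y \<in> L")
    case True
    then have "\<forall>y\<in>Crit L. x + (x - y) \<in> Crit L" using Crit_translate[OF x] by blast
    then show ?thesis by (intro exI[of _ "x + x"]) (simp add: algebra_simps)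
  next
    case False
    then obtain x' where x': "x' \<in> Crit L" "x - x' \<notin> L" by blast
    have "x' + (x - y) \<in> Crit L \<or> x + (x' - y) \<in> Crit L" if y: "y \<in> Crit L" for y
      using Crit_two_cosets[OF x x'(1) y] x'(2) Crit_translate[OF x] Crit_translate[OF x'(1)]
        diff_not_mem_commute by blast
    then show ?thesis by (intro exI[of _ "x + x'"]) (auto simp: algebra_simps)
  qed
qed

end

(* Point symmetry of Crit L about s/2 is reflection invariance with translation -s. *)
lemma reflection_invariant_if_point_symmetric:
  assumes sym: "\<forall>y\<in>Crit L. s - y \<in> Crit L"
  shows "reflection_invariant L"
  unfolding reflection_invariant_def
proof (intro exI[of _ "- s"] equalityI subsetI)
  fix z assume "z \<in> uminus ` Crit L"
  then obtain y where "y \<in> Crit L" "z = - y" by blast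
  with sym show "z \<in> (\<lambda>x. x + - s) ` Crit L" by (intro image_eqI[of _ _ "s - y"]) auto
next
  fix z assume "z \<in> (\<lambda>x. x + - s) ` Crit L"
  then obtain y where "y \<in> Crit L" "z = y + - s" by blast
  with sym show "z \<in> uminus ` Crit L" by (intro image_eqI[of _ _ "s - y"]) auto
qed

theorem mainTheorem18:
  fixes L :: "(real^3) set"
  assumes "sublattice_rank2 L"
  shows "reflection_invariant L"
proof -
  interpret A2_subgroup L
    using assms by unfold_locales (auto simp: sublattice_rank2_def)
  obtain s where "\<forall>y\<in>Crit L. s - y \<in> Crit L"
    using Crit_point_symmetric by blast
  then show ?thesis by (rule reflection_invariant_if_point_symmetric)
qed

end
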